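(* Let $\mathcal{M}=((X,\mathcal{C}),\mathcal{V})$ be a closure model and let $f:X\to X/{\equiv_{IML}}$ map each point to its $\equiv_{IML}$-equivalence class. For all $x_1,x_2\in X$ and $A\subseteq X$: if $x_1\equiv_{IML}x_2$ and $x_1\in\mathcal{C}(A)$, then $x_2\in\mathcal{C}(f^{-1}(f[A]))$.
   Context: Closure space $(X,\mathcal{C})$: $X$ non-empty, $\mathcal{C}(\emptyset)=\emptyset$, $A\subseteq\mathcal{C}(A)$, $\mathcal{C}(A_1\cup A_2)=\mathcal{C}(A_1)\cup\mathcal{C}(A_2)$; closure model adds $\mathcal{V}:AP\to\mathcal{P}(X)$. IML formulas: $\Phi::=p\mid\neg\Phi\mid\bigwedge_{i\in I}\Phi_i\mid\mathcal{N}\Phi$ ($I$ any set); $x\models p$ iff $x\in\mathcal{V}(p)$, negation and conjunction standard, $x\models\mathcal{N}\Phi$ iff $x\in\mathcal{C}(\{y\mid y\models\Phi\})$. $x_1\equiv_{IML}x_2$ iff they satisfy the same IML formulas. $f[A]=\{f(a)\mid a\in A\}$, $f^{-1}(B)=\{x\mid f(x)\in B\}$. *)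

theory Defs
  imports Main
begin

text \<open>Closure space: the carrier X is the (nonempty) type 'x itself.\<close>
definition closure_space :: "('x set \<Rightarrow> 'x set) \<Rightarrow> bool" where
  "closure_space C \<longleftrightarrow> C {} = {} \<and> (\<forall>A. A \<subseteq> C A) \<and>
     (\<forall>A1 A2. C (A1 \<union> A2) = C A1 \<union> C A2)"

datatype ('ap, 'i) iml =
    Atom 'ap
  | Neg "('ap, 'i) iml"
  | Conj "'i set" "'i \<Rightarrow> ('ap, 'i) iml"
  | Nbhd "('ap, 'i) iml"

primrec iml_ext :: "('x set \<Rightarrow> 'x set) \<Rightarrow> ('ap \<Rightarrow> 'x set) \<Rightarrow> ('ap, 'i) iml \<Rightarrow> 'x set" where
  "iml_ext C V (Atom p) = V p"
| "iml_ext C V (Neg \<phi>) = - iml_ext C V \<phi>"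
| "iml_ext C V (Conj I F) = (\<Inter>i\<in>I. iml_ext C V (F i))"
| "iml_ext C V (Nbhd \<phi>) = C (iml_ext C V \<phi>)"

definition iml_sat :: "('x set \<Rightarrow> 'x set) \<Rightarrow> ('ap \<Rightarrow> 'x set) \<Rightarrow> 'x \<Rightarrow> ('ap, 'i) iml \<Rightarrow> bool" where
  "iml_sat C V x \<phi> \<longleftrightarrow> x \<in> iml_ext C V \<phi>"

text \<open>Conjunctions are indexed by subsets of 'x set (the power set of X);
  this loses no generality, since any conjunction over an arbitrary index set has the
  same extension as a conjunction over (a choice of conjuncts for) the set of distinct
  extensions of its conjuncts, which is a set of subsets of X.\<close>
definition iml_equiv :: "('x set \<Rightarrow> 'x set) \<Rightarrow> ('ap \<Rightarrow> 'x set) \<Rightarrow> 'x \<Rightarrow> 'x \<Rightarrow> bool" where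
  "iml_equiv C V x1 x2 \<longleftrightarrow>
     (\<forall>\<phi> :: ('ap, 'x set) iml. iml_sat C V x1 \<phi> \<longleftrightarrow> iml_sat C V x2 \<phi>)"

definition iml_class :: "('x set \<Rightarrow> 'x set) \<Rightarrow> ('ap \<Rightarrow> 'x set) \<Rightarrow> 'x \<Rightarrow> 'x set" where
  "iml_class C V x = {y. iml_equiv C V x y}"

end

theory Submission
  imports Defs
begin

text \<open>Every equivalence class is the intersection of the extensions of the formulas its
  points satisfy, and extensions are closed under complement and arbitrary intersection,
  so \<open>f\<^sup>-\<^sup>1(f[A])\<close>, the union of the classes meeting \<open>A\<close>, is the extension of some formula
  \<open>\<Phi>\<close>. It contains \<open>A\<close>, so \<open>x\<^sub>1\<close> satisfies \<open>\<N>\<Phi>\<close> by monotonicity of \<open>\<C>\<close>, and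
  hence so does the equivalent point \<open>x\<^sub>2\<close>.\<close>

definition iml_definable :: "('x set \<Rightarrow> 'x set) \<Rightarrow> ('ap \<Rightarrow> 'x set) \<Rightarrow> 'x set \<Rightarrow> bool" where
  "iml_definable C V S \<longleftrightarrow> (\<exists>\<phi> :: ('ap, 'x set) iml. iml_ext C V \<phi> = S)"

lemma closure_space_mono:
  assumes "closure_space C" and "A \<subseteq> B"
  shows "C A \<subseteq> C B"
proof -
  have "C B = C A \<union> C B"
    using assms unfolding closure_space_def by (metis Un_absorb1)
  then show ?thesis by blast
qed

lemma iml_class_eq_iff: "iml_class C V w = iml_class C V a \<longleftrightarrow> iml_equiv C V a w"
  unfolding iml_class_def iml_equiv_def by auto

lemma iml_definable_Compl: "iml_definable C V S \<Longrightarrow> iml_definable C V (- S)"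
  unfolding iml_definable_def by (metis iml_ext.simps(2))

lemma iml_definable_Inter:
  fixes C :: "'x set \<Rightarrow> 'x set" and V :: "'ap \<Rightarrow> 'x set"
  assumes "\<And>S. S \<in> \<S> \<Longrightarrow> iml_definable C V S"
  shows "iml_definable C V (\<Inter>\<S>)"
proof -
  define \<phi> where "\<phi> S = (SOME \<psi> :: ('ap, 'x set) iml. iml_ext C V \<psi> = S)" for S
  have "iml_ext C V (\<phi> S) = S" if "S \<in> \<S>" for S
    unfolding \<phi>_def using assms[OF that] unfolding iml_definable_def by (rule someI_ex)
  then have "iml_ext C V (Conj \<S> \<phi>) = \<Inter>\<S>" by simp
  then show ?thesis unfolding iml_definable_def by blast
qed

lemma iml_definable_Union:
  fixes C :: "'x set \<Rightarrow> 'x set" and V :: "'ap \<Rightarrow> 'x set"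
  assumes "\<And>S. S \<in> \<S> \<Longrightarrow> iml_definable C V S"
  shows "iml_definable C V (\<Union>\<S>)"
proof -
  have "\<Union>\<S> = - \<Inter>(uminus ` \<S>)" by blast
  moreover have "iml_definable C V (- \<Inter>(uminus ` \<S>))"
    by (intro iml_definable_Compl iml_definable_Inter) (blast intro: iml_definable_Compl assms)
  ultimately show ?thesis by (rule ssubst)
qed

lemma iml_definable_closure: "iml_definable C V S \<Longrightarrow> iml_definable C V (C S)"
  unfolding iml_definable_def by (metis iml_ext.simps(4))

lemma iml_class_eq_Inter:
  fixes C :: "'x set \<Rightarrow> 'x set" and V :: "'ap \<Rightarrow> 'x set"
  shows "iml_class C V y = \<Inter>{iml_ext C V \<phi> | \<phi> :: ('ap, 'x set) iml. y \<in> iml_ext C V \<phi>}"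
proof (intro equalityI subsetI)
  fix w assume "w \<in> iml_class C V y"
  then show "w \<in> \<Inter>{iml_ext C V \<phi> | \<phi> :: ('ap, 'x set) iml. y \<in> iml_ext C V \<phi>}"
    unfolding iml_class_def iml_equiv_def iml_sat_def by blast
next
  fix w assume w: "w \<in> \<Inter>{iml_ext C V \<phi> | \<phi> :: ('ap, 'x set) iml. y \<in> iml_ext C V \<phi>}"
  then have sat: "w \<in> iml_ext C V \<phi>" if "y \<in> iml_ext C V \<phi>" for \<phi> :: "('ap, 'x set) iml"
    using that by blast
  have "y \<in> iml_ext C V \<phi> \<longleftrightarrow> w \<in> iml_ext C V \<phi>" for \<phi> :: "('ap, 'x set) iml"
    using sat[of \<phi>] sat[of "Neg \<phi>"] by auto
  then show "w \<in> iml_class C V y"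
    unfolding iml_class_def iml_equiv_def iml_sat_def by blast
qed

lemma iml_definable_class:
  fixes C :: "'x set \<Rightarrow> 'x set" and V :: "'ap \<Rightarrow> 'x set"
  shows "iml_definable C V (iml_class C V y)"
proof -
  have "iml_definable C V (\<Inter>{iml_ext C V \<phi> | \<phi> :: ('ap, 'x set) iml. y \<in> iml_ext C V \<phi>})"
    by (rule iml_definable_Inter) (auto simp: iml_definable_def)
  then show ?thesis by (simp only: iml_class_eq_Inter)
qed

lemma iml_class_vimage_image: "iml_class C V -` (iml_class C V ` A) = \<Union>(iml_class C V ` A)"
proof (intro equalityI subsetI)
  fix w assume "w \<in> iml_class C V -` (iml_class C V ` A)"
  then obtain a where "a \<in> A" "iml_class C V w = iml_class C V a" by auto
  then show "w \<in> \<Union>(iml_class C V ` A)"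
    unfolding iml_class_eq_iff by (auto simp: iml_class_def)
next
  fix w assume "w \<in> \<Union>(iml_class C V ` A)"
  then obtain a where "a \<in> A" "iml_equiv C V a w" by (auto simp: iml_class_def)
  then have "a \<in> A" "iml_class C V w = iml_class C V a"
    by (simp_all only: iml_class_eq_iff)
  then show "w \<in> iml_class C V -` (iml_class C V ` A)"
    by (intro vimageI2 image_eqI)
qed

lemma iml_equiv_definable:
  fixes C :: "'x set \<Rightarrow> 'x set" and V :: "'ap \<Rightarrow> 'x set"
  assumes "iml_equiv C V x1 x2" and "iml_definable C V S" and "x1 \<in> S"
  shows "x2 \<in> S"
proof -
  obtain \<phi> :: "('ap, 'x set) iml" where "iml_ext C V \<phi> = S"
    using assms(2) unfolding iml_definable_def by blast
  then show ?thesis using assms(1,3) unfolding iml_equiv_def iml_sat_def by blast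
qed

theorem lemma10:
  fixes C :: "'x set \<Rightarrow> 'x set" and V :: "'ap \<Rightarrow> 'x set"
    and x1 x2 :: 'x and A :: "'x set"
  assumes "closure_space C"
    and "iml_equiv C V x1 x2"
    and "x1 \<in> C A"
  shows "x2 \<in> C (iml_class C V -` (iml_class C V ` A))"
proof -
  let ?B = "iml_class C V -` (iml_class C V ` A)"
  have "iml_definable C V ?B"
    unfolding iml_class_vimage_image
    by (rule iml_definable_Union) (blast intro: iml_definable_class)
  then have "iml_definable C V (C ?B)" by (rule iml_definable_closure)
  moreover have "x1 \<in> C ?B"
    using closure_space_mono[OF assms(1), of A ?B] assms(3) by blast
  ultimately show ?thesis by (rule iml_equiv_definable[OF assms(2)])
qed

end
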